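(* Let $n\ge2$ and consider $\mathbb R^n\times\bigwedge^2(\mathbb R^n)$ with an adequate scalar product and induced norm $\lVert\cdot\rVert_{\mathrm{eu}}$. There exists a constant $K_1$ such that for every $(n-1)$-tuple $(x_1,\dots,x_{n-1})$ of points of $\mathbb R^n$, every $Y\in\bigwedge^2(\mathbb R^n)$ and every $\varepsilon>0$ with $\mathrm{MinHeight}(x_1,\dots,x_{n-1})\ge\varepsilon$, there exist $v_1,\dots,v_{n-1}\in\mathbb R^n$ such that $$Y=\sum_{j=1}^{n-1}x_j\wedge v_j\quad\text{and}\quad \lVert v_j\rVert_{\mathrm{eu}}\le K_1\frac{\lVert Y\rVert_{\mathrm{eu}}}{\varepsilon}\ \text{for every } j\in\{1,\dots,n-1\}.$$
   Context: $v\wedge w:=v\otimes w-w\otimes v$, and $\bigwedge^2(\mathbb R^n)$ is the span of such tensors. A scalar product on $\mathbb R^n\times\bigwedge^2(\mathbb R^n)$ is adequate if $\mathbb R^n\perp\bigwedge^2(\mathbb R^n)$ and $\langle v_1\wedge w_1,v_2\wedge w_2\rangle=\langle v_1,v_2\rangle\langle w_1,w_2\rangle-\langle v_1,w_2\rangle\langle w_1,v_2\rangle$. $\mathrm{MinHeight}(a_1,\dots,a_m):=\min_j d_{\mathrm{eu}}(a_j,\mathrm{span}(a_1,\dots,\widehat a_j,\dots,a_m))$, where $\widehat a_j$ means $a_j$ is omitted and $d_{\mathrm{eu}}$ is the distance from $\lVert\cdot\rVert_{\mathrm{eu}}$ on $\mathbb R^n$. *)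

theory Defs
  imports "HOL-Analysis.Analysis"
begin

text \<open>Tensors in R^n (x) R^n are represented as matrices real^'n^'n;
  v \<wedge> w := v (x) w - w (x) v.\<close>
definition wedge :: "real^'n \<Rightarrow> real^'n \<Rightarrow> real^'n^'n" where
  "wedge v w = (\<chi> i j. v$i * w$j - w$i * v$j)"

definition Lambda2 :: "(real^'n^'n) set" where
  "Lambda2 = span {wedge v w | v w. True}"

definition Amb :: "((real^'n) \<times> (real^'n^'n)) set" where
  "Amb = UNIV \<times> Lambda2"

definition adequate ::
  "(((real^'n) \<times> (real^'n^'n)) \<Rightarrow> ((real^'n) \<times> (real^'n^'n)) \<Rightarrow> real) \<Rightarrow> bool" where
  "adequate ip \<longleftrightarrow>
     (\<forall>a\<in>Amb. \<forall>b\<in>Amb. ip a b = ip b a) \<and>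
     (\<forall>a\<in>Amb. \<forall>b\<in>Amb. \<forall>c\<in>Amb. ip (a + b) c = ip a c + ip b c) \<and>
     (\<forall>a\<in>Amb. \<forall>c\<in>Amb. \<forall>r::real. ip (r *\<^sub>R a) c = r * ip a c) \<and>
     (\<forall>a\<in>Amb. a \<noteq> 0 \<longrightarrow> ip a a > 0) \<and>
     (\<forall>x. \<forall>Y\<in>Lambda2. ip (x, 0) (0, Y) = 0) \<and>
     (\<forall>v1 w1 v2 w2. ip (0, wedge v1 w1) (0, wedge v2 w2) =
         ip (v1, 0) (v2, 0) * ip (w1, 0) (w2, 0) - ip (v1, 0) (w2, 0) * ip (w1, 0) (v2, 0))"

definition eunorm ::
  "(((real^'n) \<times> (real^'n^'n)) \<Rightarrow> ((real^'n) \<times> (real^'n^'n)) \<Rightarrow> real) \<Rightarrow> ((real^'n) \<times> (real^'n^'n)) \<Rightarrow> real" where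
  "eunorm ip z = sqrt (ip z z)"

definition eudist_set ::
  "(((real^'n) \<times> (real^'n^'n)) \<Rightarrow> ((real^'n) \<times> (real^'n^'n)) \<Rightarrow> real) \<Rightarrow> real^'n \<Rightarrow> (real^'n) set \<Rightarrow> real" where
  "eudist_set ip a S = Inf {eunorm ip (a - s, 0) | s. s \<in> S}"

text \<open>MinHeight of the m-tuple a_0, ..., a_{m-1} (indices shifted to start at 0), m \<ge> 1.\<close>
definition MinHeight ::
  "(((real^'n) \<times> (real^'n^'n)) \<Rightarrow> ((real^'n) \<times> (real^'n^'n)) \<Rightarrow> real) \<Rightarrow> nat \<Rightarrow> (nat \<Rightarrow> real^'n) \<Rightarrow> real" where
  "MinHeight ip m a = Min ((\<lambda>j. eudist_set ip (a j) (span (a ` ({..<m} - {j})))) ` {..<m})"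

end

theory Submission
  imports Defs
begin

text \<open>Write \<open>g\<close> for the scalar product on \<open>\<real>\<^sup>n\<close> and read \<open>Y\<close> as the antisymmetric bilinear
  form \<open>B a b = \<langle>Y, a \<wedge> b\<rangle>\<close>. Since the wedges span \<open>\<Lambda>\<^sup>2\<close>, \<open>Y\<close> is determined by \<open>B\<close>, and
  Cauchy-Schwarz together with adequacy gives \<open>\<bar>B a b\<bar> \<le> \<parallel>Y\<parallel> \<parallel>a\<parallel> \<parallel>b\<parallel>\<close>.
  The height bound yields a dual basis \<open>f\<^sub>j\<close> of the \<open>x\<^sub>j\<close> inside their span \<open>X\<close> with
  \<open>\<parallel>f\<^sub>j\<parallel> \<le> 1/\<epsilon>\<close>; let \<open>P\<close> be the orthogonal projection onto \<open>X\<close> and \<open>w\<^sub>j\<close> the Riesz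
  representative of \<open>B f\<^sub>j\<close>, so that \<open>\<parallel>w\<^sub>j\<parallel> \<le> \<parallel>Y\<parallel>/\<epsilon>\<close>. As \<open>X\<^sup>\<bottom>\<close> is a line,
  \<open>B (a - P a) (b - P b) = 0\<close>, and expanding \<open>B\<close> through \<open>P\<close> shows that
  \<open>v\<^sub>j = w\<^sub>j - P w\<^sub>j / 2\<close> satisfies \<open>B a b = \<Sum>\<^sub>j g x\<^sub>j a g v\<^sub>j b - g x\<^sub>j b g v\<^sub>j a\<close>,
  i.e. \<open>Y = \<Sum>\<^sub>j x\<^sub>j \<wedge> v\<^sub>j\<close>, with \<open>\<parallel>v\<^sub>j\<parallel> \<le> \<parallel>w\<^sub>j\<parallel>\<close>. Hence \<open>K\<^sub>1 = 1\<close> works.\<close>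

lemma inj_on_if_notin_span_others:
  fixes x :: "nat \<Rightarrow> 'a::real_vector"
  assumes "\<And>j. j < m \<Longrightarrow> x j \<notin> span (x ` ({..<m} - {j}))"
  shows "inj_on x {..<m}"
proof (rule inj_onI, rule ccontr)
  fix i j
  assume "i \<in> {..<m}" "j \<in> {..<m}" "x i = x j" "i \<noteq> j"
  then have "x i \<in> span (x ` ({..<m} - {i}))"
    by (intro span_base) auto
  then show False
    using assms \<open>i \<in> {..<m}\<close> by blast
qed

lemma independent_image_if_notin_span_others:
  fixes x :: "nat \<Rightarrow> 'a::real_vector"
  assumes "\<And>j. j < m \<Longrightarrow> x j \<notin> span (x ` ({..<m} - {j}))"
  shows "independent (x ` {..<m})"
  unfolding dependent_def
proof clarsimp
  fix j
  assume "j < m" "x j \<in> span (x ` {..<m} - {x j})"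
  moreover have "x ` {..<m} - {x j} \<subseteq> x ` ({..<m} - {j})"
    by auto
  ultimately show False
    using assms span_mono by blast
qed

text \<open>Relative to a subspace \<open>S\<close> because adequacy constrains \<open>ip\<close> only on \<open>Amb\<close>.\<close>
locale inner_form_on =
  fixes S :: "'a::real_vector set" and g :: "'a \<Rightarrow> 'a \<Rightarrow> real"
  assumes subspace: "subspace S"
    and sym: "a \<in> S \<Longrightarrow> b \<in> S \<Longrightarrow> g a b = g b a"
    and add_left: "a \<in> S \<Longrightarrow> b \<in> S \<Longrightarrow> c \<in> S \<Longrightarrow> g (a + b) c = g a c + g b c"
    and scale_left: "a \<in> S \<Longrightarrow> c \<in> S \<Longrightarrow> g (r *\<^sub>R a) c = r * g a c"
    and pos: "a \<in> S \<Longrightarrow> a \<noteq> 0 \<Longrightarrow> g a a > 0"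
begin

lemma add_right: "a \<in> S \<Longrightarrow> b \<in> S \<Longrightarrow> c \<in> S \<Longrightarrow> g a (b + c) = g a b + g a c"
  using subspace by (simp add: sym[of a] add_left subspace_add)

lemma scale_right: "a \<in> S \<Longrightarrow> c \<in> S \<Longrightarrow> g c (r *\<^sub>R a) = r * g c a"
  using subspace by (simp add: sym[of c] scale_left subspace_scale)

lemma zero_left: "c \<in> S \<Longrightarrow> g 0 c = 0"
  using scale_left[of c c 0] by simp

lemma diff_left: "a \<in> S \<Longrightarrow> b \<in> S \<Longrightarrow> c \<in> S \<Longrightarrow> g (a - b) c = g a c - g b c"
  using add_left[of a "- b" c] scale_left[of b c "-1"] subspace
  by (simp add: subspace_neg)

lemma sum_left:
  assumes "\<And>i. i \<in> I \<Longrightarrow> F i \<in> S" and "c \<in> S"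
  shows "g (sum F I) c = (\<Sum>i\<in>I. g (F i) c)"
  using assms(1)
proof (induction I rule: infinite_finite_induct)
  case (insert i I)
  then show ?case
    using subspace assms(2) by (simp add: add_left subspace_sum)
qed (use assms(2) zero_left in auto)

lemma nonneg: "a \<in> S \<Longrightarrow> g a a \<ge> 0"
  using pos[of a] zero_left[of 0] by (cases "a = 0") auto

lemma self_eq_0_iff: "a \<in> S \<Longrightarrow> g a a = 0 \<longleftrightarrow> a = 0"
  using pos[of a] zero_left[of 0] subspace_0[OF subspace] by (cases "a = 0") auto

lemma expand_square:
  assumes "a \<in> S" "b \<in> S"
  shows "g (a + t *\<^sub>R b) (a + t *\<^sub>R b) = g a a + 2 * t * g a b + t\<^sup>2 * g b b"
  using assms subspace sym[OF assms]
  by (simp add: add_left add_right scale_left scale_right subspace_add subspace_scale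
      power2_eq_square algebra_simps)

lemma Cauchy_Schwarz:
  assumes "a \<in> S" "b \<in> S"
  shows "(g a b)\<^sup>2 \<le> g a a * g b b"
proof (cases "a = 0")
  case True
  then show ?thesis using assms zero_left by simp
next
  case False
  then have "g a a > 0"
    using assms pos by blast
  have "0 \<le> g b b + 2 * t * g b a + t\<^sup>2 * g a a" for t
    using assms subspace nonneg[of "b + t *\<^sub>R a"] expand_square[of b a t]
    by (simp add: subspace_add subspace_scale)
  from this[of "- g a b / g a a"] show ?thesis
    using \<open>g a a > 0\<close> assms by (simp add: sym[of b a] field_simps power2_eq_square)
qed

lemma orthogonal_span:
  assumes "z \<in> S" "B \<subseteq> S" "\<forall>b\<in>B. g z b = 0" "s \<in> span B"
  shows "g z s = 0"
proof -
  have "subspace {s \<in> S. g z s = 0}"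
    using subspace assms(1) zero_left[OF assms(1)]
    by (auto simp: subspace_def add_right scale_right sym[of z 0])
  then have "span B \<subseteq> {s \<in> S. g z s = 0}"
    using assms(2,3) by (intro span_minimal) auto
  then show ?thesis using assms(4) by auto
qed

lemma eq_0_if_orthogonal_generators:
  assumes "B \<subseteq> S" "z \<in> span B" "\<forall>b\<in>B. g z b = 0"
  shows "z = 0"
proof -
  have "z \<in> S" using assms(1,2) span_minimal subspace by blast
  then show ?thesis using orthogonal_span[OF _ assms(1,3,2)] self_eq_0_iff by blast
qed

end

lemma inner_form_on_linear_pullback:
  assumes "inner_form_on S g" and "linear f" and "inj_on f T" and "subspace T" and "f ` T \<subseteq> S"
  shows "inner_form_on T (\<lambda>a b. g (f a) (f b))"
proof -
  interpret inner_form_on S g by fact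
  have "f a \<noteq> 0" if "a \<in> T" "a \<noteq> 0" for a
    using assms(3,4) that linear_0[OF assms(2)] subspace_0 by (metis inj_onD)
  moreover have "f a \<in> S" if "a \<in> T" for a
    using assms(5) that by blast
  ultimately show ?thesis
    using assms(4)
    by unfold_locales (auto simp: sym add_left scale_left pos linear_add[OF assms(2)]
        linear_scale[OF assms(2)])
qed

locale inner_form = inner_form_on "UNIV :: 'a::euclidean_space set" g for g
begin

lemma bilinear: "bilinear g"
  by (auto simp: bilinear_def add_left add_right scale_left scale_right intro!: linearI)

lemmas bilinear_simps = bilinear_ladd[OF bilinear] bilinear_radd[OF bilinear]
  bilinear_lmul[OF bilinear] bilinear_rmul[OF bilinear] bilinear_lsub[OF bilinear]
  bilinear_rsub[OF bilinear] bilinear_lzero[OF bilinear] bilinear_rzero[OF bilinear]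

lemma orthogonal_projection_exists:
  assumes "finite B"
  shows "\<exists>p\<in>span B. \<forall>b\<in>B. g (x - p) b = 0"
  using assms
proof (induction B arbitrary: x rule: finite_induct)
  case empty
  then show ?case by (auto intro: span_zero)
next
  case (insert b B)
  obtain p where p: "p \<in> span B" "\<forall>b'\<in>B. g (x - p) b' = 0"
    using insert.IH by blast
  obtain q where q: "q \<in> span B" "\<forall>b'\<in>B. g (b - q) b' = 0"
    using insert.IH by blast
  define r where "r = b - q"
  define c where "c = g (x - p) r / g r r" \<comment> \<open>\<open>c = 0\<close> if \<open>r = 0\<close>, as \<open>x / 0 = 0\<close>\<close>
  have span_B: "span B \<subseteq> span (insert b B)"
    by (rule span_mono) auto
  have "p + c *\<^sub>R r \<in> span (insert b B)"
    using p(1) q(1) span_B unfolding r_def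
    by (intro span_add span_mul span_diff) (auto intro: span_base)
  moreover have orth_B: "\<forall>b'\<in>B. g (x - (p + c *\<^sub>R r)) b' = 0"
    using p(2) q(2) by (simp add: r_def bilinear_simps algebra_simps)
  moreover have "g (x - (p + c *\<^sub>R r)) q = 0"
    using orthogonal_span[OF _ _ orth_B q(1)] by simp
  moreover have "g (x - (p + c *\<^sub>R r)) r = 0"
    using pos[of r] by (cases "r = 0") (auto simp: c_def bilinear_simps field_simps)
  ultimately show ?case
    using orth_B by (auto simp: r_def bilinear_simps intro!: bexI[of _ "p + c *\<^sub>R r"])
qed

lemma not_in_span_if_orthogonal:
  assumes "v \<noteq> 0" "\<forall>s\<in>X. g v s = 0"
  shows "v \<notin> span X"
  using orthogonal_span[of v X v] assms self_eq_0_iff by auto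

lemma orthogonal_complement_parallel:
  assumes "independent X" "card X + 1 = DIM('a)"
    and "\<forall>s\<in>X. g a s = 0" "\<forall>s\<in>X. g b s = 0"
  shows "a = 0 \<or> (\<exists>r. b = r *\<^sub>R a)"
proof (rule ccontr)
  assume "\<not> ?thesis"
  then have "a \<noteq> 0" and c_ne: "b - (g b a / g a a) *\<^sub>R a \<noteq> 0" (is "?c \<noteq> 0")
    by auto
  then have "a \<notin> span X"
    using not_in_span_if_orthogonal assms(3) by blast
  then have indep_aX: "independent (insert a X)" and "a \<notin> X"
    using assms(1) independent_insertI span_base by blast+
  have "\<forall>s\<in>insert a X. g ?c s = 0"
    using assms(3,4) pos[OF _ \<open>a \<noteq> 0\<close>] by (auto simp: bilinear_simps)
  then have "?c \<notin> span (insert a X)"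
    using not_in_span_if_orthogonal c_ne by blast
  then have "independent (insert ?c (insert a X))" and "?c \<notin> insert a X"
    using indep_aX independent_insertI span_base by blast+
  then have "card (insert ?c (insert a X)) \<le> DIM('a)"
    using independent_bound by blast
  moreover have "finite X"
    using assms(1) independent_bound by blast
  ultimately show False
    using \<open>a \<notin> X\<close> \<open>?c \<notin> insert a X\<close> assms(2) by simp
qed

lemma Riesz_representation:
  assumes "linear \<phi>"
  shows "\<exists>w. \<forall>y. g w y = \<phi> y"
proof -
  define G where "G v = (\<Sum>b\<in>Basis. g v b *\<^sub>R b)" for v
  have expand: "\<psi> y = (\<Sum>b\<in>Basis. \<psi> b *\<^sub>R b) \<bullet> y" if "linear \<psi>" for \<psi> :: "'a \<Rightarrow> real" and y
  proof -
    have "\<psi> y = \<psi> (\<Sum>b\<in>Basis. (y \<bullet> b) *\<^sub>R b)"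
      by (simp add: euclidean_representation)
    also have "\<dots> = (\<Sum>b\<in>Basis. \<psi> b * (b \<bullet> y))"
      by (simp add: linear_sum[OF that] linear_scale[OF that] inner_commute mult.commute)
    finally show ?thesis
      by (simp add: inner_sum_left)
  qed
  have G_inner: "G v \<bullet> y = g v y" for v y
    using expand[of "g v" y] bilinear by (simp add: G_def bilinear_def)
  have "linear G"
    by (rule linearI) (simp_all add: G_def bilinear_simps scaleR_add_left sum.distrib
        scaleR_sum_right)
  moreover have "inj G"
  proof (rule injI)
    fix u v
    assume "G u = G v"
    then have "g (u - v) y = 0" for y
      using G_inner[of u y] G_inner[of v y] by (simp add: bilinear_simps)
    then show "u = v"
      using self_eq_0_iff[of "u - v"] by simp
  qed
  ultimately obtain w where "G w = (\<Sum>b\<in>Basis. \<phi> b *\<^sub>R b)"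
    using linear_inj_imp_surj by (metis surjD)
  then show ?thesis
    using G_inner expand[OF assms] by metis
qed

definition dual_basis :: "nat \<Rightarrow> (nat \<Rightarrow> 'a) \<Rightarrow> (nat \<Rightarrow> 'a) \<Rightarrow> bool" where
  "dual_basis m x f \<longleftrightarrow>
     (\<forall>j<m. \<forall>k<m. g (f j) (x k) = (if k = j then 1 else 0)) \<and> (\<forall>j<m. f j \<in> span (x ` {..<m}))"

lemma dual_vector_exists:
  fixes x :: "nat \<Rightarrow> 'a"
  assumes "j < m" "\<epsilon> > 0"
    and height: "\<forall>s\<in>span (x ` ({..<m} - {j})). \<epsilon>\<^sup>2 \<le> g (x j - s) (x j - s)"
  shows "\<exists>f. (\<forall>k<m. g f (x k) = (if k = j then 1 else 0)) \<and> f \<in> span (x ` {..<m})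
           \<and> g f f \<le> 1 / \<epsilon>\<^sup>2"
proof -
  define B where "B = x ` ({..<m} - {j})"
  have "finite B"
    by (simp add: B_def)
  then obtain p where p: "p \<in> span B" "\<forall>b\<in>B. g (x j - p) b = 0"
    using orthogonal_projection_exists by blast
  have span_B: "span B \<subseteq> span (x ` {..<m})"
    by (rule span_mono) (auto simp: B_def)
  define r where "r = x j - p"
  have "\<epsilon>\<^sup>2 \<le> g r r"
    using height p(1) by (simp add: B_def r_def)
  moreover have "0 < \<epsilon>\<^sup>2"
    using assms(2) by simp
  ultimately have r_pos: "g r r > 0"
    by linarith
  have "g r p = 0"
    using orthogonal_span[of r B p] p by (simp add: r_def)
  then have "g r (x j) = g r r"
    by (simp add: r_def bilinear_simps)
  then have "\<forall>k<m. g ((1 / g r r) *\<^sub>R r) (x k) = (if k = j then 1 else 0)"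
    using p(2) r_pos by (auto simp: B_def r_def bilinear_simps)
  moreover have "(1 / g r r) *\<^sub>R r \<in> span (x ` {..<m})"
    using p(1) span_B assms(1) unfolding r_def by (intro span_mul span_diff) (auto intro: span_base)
  moreover have "g ((1 / g r r) *\<^sub>R r) ((1 / g r r) *\<^sub>R r) \<le> 1 / \<epsilon>\<^sup>2"
    using \<open>\<epsilon>\<^sup>2 \<le> g r r\<close> r_pos assms(2)
    by (simp add: bilinear_simps power2_eq_square frac_le)
  ultimately show ?thesis
    by blast
qed

lemma dual_basis_exists:
  fixes x :: "nat \<Rightarrow> 'a"
  assumes "\<epsilon> > 0"
    and "\<forall>j<m. \<forall>s\<in>span (x ` ({..<m} - {j})). \<epsilon>\<^sup>2 \<le> g (x j - s) (x j - s)"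
  shows "\<exists>f. dual_basis m x f \<and> (\<forall>j<m. g (f j) (f j) \<le> 1 / \<epsilon>\<^sup>2)"
proof -
  have "\<forall>j. \<exists>f. j < m \<longrightarrow> (\<forall>k<m. g f (x k) = (if k = j then 1 else 0))
           \<and> f \<in> span (x ` {..<m}) \<and> g f f \<le> 1 / \<epsilon>\<^sup>2"
    using dual_vector_exists assms by blast
  then show ?thesis
    unfolding dual_basis_def by metis
qed

lemma dual_basis_notin_span_others:
  assumes "dual_basis m x f" "j < m"
  shows "x j \<notin> span (x ` ({..<m} - {j}))"
proof
  assume "x j \<in> span (x ` ({..<m} - {j}))"
  moreover have "\<forall>b\<in>x ` ({..<m} - {j}). g (f j) b = 0"
    using assms unfolding dual_basis_def by auto
  ultimately have "g (f j) (x j) = 0"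
    using orthogonal_span by blast
  then show False
    using assms unfolding dual_basis_def by simp
qed

definition dual_projection :: "nat \<Rightarrow> (nat \<Rightarrow> 'a) \<Rightarrow> (nat \<Rightarrow> 'a) \<Rightarrow> 'a \<Rightarrow> 'a" where
  "dual_projection m x f a = (\<Sum>k<m. g (x k) a *\<^sub>R f k)"

lemma dual_projection_in_span:
  "dual_basis m x f \<Longrightarrow> dual_projection m x f a \<in> span (x ` {..<m})"
  unfolding dual_projection_def dual_basis_def by (intro span_sum span_mul) auto

lemma dual_projection_residual_orthogonal:
  assumes "dual_basis m x f" "h \<in> span (x ` {..<m})"
  shows "g (a - dual_projection m x f a) h = 0"
proof (rule orthogonal_span[OF _ _ _ assms(2)])
  have "g (dual_projection m x f a) (x l) = g a (x l)" if "l < m" for l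
  proof -
    have "g (dual_projection m x f a) (x l) = (\<Sum>k<m. g (x k) a * g (f k) (x l))"
      by (simp add: dual_projection_def sum_left bilinear_simps)
    also have "\<dots> = (\<Sum>k<m. if k = l then g (x l) a else 0)"
      using assms(1) that by (intro sum.cong) (auto simp: dual_basis_def)
    also have "\<dots> = g a (x l)"
      using that sym[of "x l" a] by simp
    finally show ?thesis .
  qed
  then show "\<forall>b\<in>x ` {..<m}. g (a - dual_projection m x f a) b = 0"
    by (auto simp: bilinear_simps)
qed auto

lemma dual_projection_self_adjoint:
  assumes "dual_basis m x f"
  shows "g (dual_projection m x f a) b = g a (dual_projection m x f b)"
proof -
  let ?P = "dual_projection m x f"
  have "g (?P a) b = g (?P a) (?P b) + g (b - ?P b) (?P a)"
    using sym[of "?P a" "b - ?P b"] by (simp add: bilinear_simps)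
  moreover have "g a (?P b) = g (?P a) (?P b) + g (a - ?P a) (?P b)"
    by (simp add: bilinear_simps)
  ultimately show ?thesis
    using dual_projection_residual_orthogonal[OF assms dual_projection_in_span[OF assms]]
    by simp
qed

lemma sub_half_projection_le:
  assumes "g (w - p) p = 0"
  shows "g (w - (1/2) *\<^sub>R p) (w - (1/2) *\<^sub>R p) \<le> g w w"
proof -
  have "g (w - (1/2) *\<^sub>R p) (w - (1/2) *\<^sub>R p) = g w w - g w p + 1/4 * g p p"
    using expand_square[of w p "- 1/2"] by (simp add: power2_eq_square)
  moreover have "g w p = g p p"
    using assms by (simp add: bilinear_simps)
  ultimately show ?thesis
    using nonneg[of p] by simp
qed

text \<open>Since \<open>B a b = B (P a) b + B a (P b) - B (P a) (P b)\<close>, the factor \<open>1/2\<close> splits the last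
  term evenly between the two antisymmetric halves.\<close>
lemma antisymmetric_form_via_projection:
  assumes B: "bilinear B" and antisym: "\<And>a b. B a b = - B b a"
    and residual: "\<And>a b. B (a - P a) (b - P b) = 0"
    and P_left: "\<And>a y. B (P a) y = (\<Sum>k<m. g (x k) a * B (f k) y)"
    and P_adjoint: "\<And>u y. g (P u) y = g u (P y)"
    and w: "\<And>j y. g (w j) y = B (f j) y"
  shows "B a b = (\<Sum>j<m. g (x j) a * g (w j - (1/2) *\<^sub>R P (w j)) b
                         - g (x j) b * g (w j - (1/2) *\<^sub>R P (w j)) a)"
proof -
  have half: "(\<Sum>j<m. g (x j) a * g (w j - (1/2) *\<^sub>R P (w j)) b)
              = B (P a) b - 1/2 * B (P a) (P b)" for a b
    by (simp add: bilinear_simps P_adjoint w P_left sum_subtractf sum_distrib_left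
        algebra_simps)
  have "B a b = B (P a) b + B a (P b) - B (P a) (P b)"
    using residual[of a b] B by (simp add: bilinear_lsub bilinear_rsub)
  then show ?thesis
    using antisym[of a "P b"] antisym[of "P a" "P b"]
    by (simp add: sum_subtractf half)
qed

lemma dual_projection_residuals_parallel:
  assumes dual: "dual_basis m x f" and dim: "m + 1 = DIM('a)"
  shows "a - dual_projection m x f a = 0
         \<or> (\<exists>r. b - dual_projection m x f b = r *\<^sub>R (a - dual_projection m x f a))"
proof -
  have notin: "\<And>j. j < m \<Longrightarrow> x j \<notin> span (x ` ({..<m} - {j}))"
    using dual_basis_notin_span_others[OF dual] .
  have "\<forall>s\<in>x ` {..<m}. g (c - dual_projection m x f c) s = 0" for c
    using dual_projection_residual_orthogonal[OF dual span_base] by blast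
  moreover have "card (x ` {..<m}) + 1 = DIM('a)"
    using card_image[OF inj_on_if_notin_span_others[OF notin]] dim by simp
  ultimately show ?thesis
    using orthogonal_complement_parallel[OF independent_image_if_notin_span_others[OF notin]]
    by blast
qed

lemma antisymmetric_form_decomposition:
  fixes x f :: "nat \<Rightarrow> 'a" and B :: "'a \<Rightarrow> 'a \<Rightarrow> real"
  assumes B: "bilinear B" and antisym: "\<And>a b. B a b = - B b a"
    and bound: "\<And>a b. (B a b)\<^sup>2 \<le> C * (g a a * g b b)" and "0 \<le> C"
    and dual: "dual_basis m x f" and dim: "m + 1 = DIM('a)"
  shows "\<exists>v. (\<forall>a b. B a b = (\<Sum>j<m. g (x j) a * g (v j) b - g (x j) b * g (v j) a))
             \<and> (\<forall>j<m. g (v j) (v j) \<le> C * g (f j) (f j))"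
proof -
  let ?P = "dual_projection m x f"
  have residual: "B (a - ?P a) (b - ?P b) = 0" for a b
    using dual_projection_residuals_parallel[OF dual dim, of a b] antisym[of "a - ?P a" "a - ?P a"]
    by (auto simp: B bilinear_lzero bilinear_rmul)
  have "\<forall>j. \<exists>w. \<forall>y. g w y = B (f j) y"
    using Riesz_representation B by (simp add: bilinear_def)
  then obtain w where w: "\<And>j y. g (w j) y = B (f j) y"
    by metis
  have P_left: "B (?P a) y = (\<Sum>k<m. g (x k) a * B (f k) y)" for a y
  proof -
    have lin: "linear (\<lambda>a. B a y)"
      using B by (simp add: bilinear_def)
    show ?thesis
      by (simp add: dual_projection_def linear_sum[OF lin] linear_scale[OF lin])
  qed
  define v where "v j = w j - (1/2) *\<^sub>R ?P (w j)" for j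
  have "B a b = (\<Sum>j<m. g (x j) a * g (v j) b - g (x j) b * g (v j) a)" for a b
    unfolding v_def
    by (rule antisymmetric_form_via_projection[OF B antisym residual P_left
          dual_projection_self_adjoint[OF dual] w])
  moreover have "g (v j) (v j) \<le> C * g (f j) (f j)" for j
  proof -
    have "g (v j) (v j) \<le> g (w j) (w j)"
      unfolding v_def
      by (intro sub_half_projection_le dual_projection_residual_orthogonal[OF dual]
          dual_projection_in_span[OF dual])
    moreover have "g (w j) (w j) * g (w j) (w j) \<le> (C * g (f j) (f j)) * g (w j) (w j)"
      using bound[of "f j" "w j"] w[of j "w j"] by (simp add: power2_eq_square algebra_simps)
    then have "g (w j) (w j) \<le> C * g (f j) (f j)"
      using nonneg[of "w j"] nonneg[of "f j"] \<open>0 \<le> C\<close>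
      by (cases "g (w j) (w j) = 0") auto
    ultimately show ?thesis
      by linarith
  qed
  ultimately show ?thesis
    by blast
qed

end

lemma bilinear_wedge: "bilinear wedge"
  by (auto simp: bilinear_def wedge_def vec_eq_iff algebra_simps intro!: linearI)

lemma wedge_commute: "wedge a b = - wedge b a"
  by (simp add: wedge_def vec_eq_iff)

lemma wedge_in_Lambda2: "wedge a b \<in> Lambda2"
  unfolding Lambda2_def by (rule span_base) blast

lemma subspace_Lambda2: "subspace Lambda2"
  by (simp add: Lambda2_def)

locale adequate_space =
  fixes ip :: "((real^'n) \<times> (real^'n^'n)) \<Rightarrow> ((real^'n) \<times> (real^'n^'n)) \<Rightarrow> real"
  assumes adequate: "adequate ip"
begin

definition vec_form :: "real^'n \<Rightarrow> real^'n \<Rightarrow> real" where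
  "vec_form a b = ip (a, 0) (b, 0)"

definition bivec_form :: "real^'n^'n \<Rightarrow> real^'n^'n \<Rightarrow> real" where
  "bivec_form Y Z = ip (0, Y) (0, Z)"

lemma inner_form_on_Amb: "inner_form_on Amb ip"
proof -
  have "subspace Amb"
    unfolding Amb_def by (intro subspace_Times subspace_UNIV subspace_Lambda2)
  then show ?thesis
    using adequate unfolding adequate_def inner_form_on_def by blast
qed

sublocale V: inner_form vec_form
  unfolding inner_form_def vec_form_def
  by (rule inner_form_on_linear_pullback[OF inner_form_on_Amb])
    (auto simp: Amb_def subspace_Lambda2 subspace_0 inj_on_def intro!: linearI)

sublocale L: inner_form_on Lambda2 bivec_form
  unfolding bivec_form_def
  by (rule inner_form_on_linear_pullback[OF inner_form_on_Amb])
    (auto simp: Amb_def subspace_Lambda2 inj_on_def intro!: linearI)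

lemma bivec_form_wedge:
  "bivec_form (wedge a b) (wedge c d) = vec_form a c * vec_form b d - vec_form a d * vec_form b c"
  using adequate by (simp add: adequate_def bivec_form_def vec_form_def)

lemma bilinear_bivec_form_wedge:
  assumes "Y \<in> Lambda2"
  shows "bilinear (\<lambda>a b. bivec_form Y (wedge a b))"
  unfolding bilinear_def using assms
  by (auto intro!: linearI simp: bilinear_ladd[OF bilinear_wedge] bilinear_radd[OF bilinear_wedge]
      bilinear_lmul[OF bilinear_wedge] bilinear_rmul[OF bilinear_wedge]
      L.add_right L.scale_right wedge_in_Lambda2)

lemma bivec_form_wedge_commute:
  assumes "Y \<in> Lambda2"
  shows "bivec_form Y (wedge a b) = - bivec_form Y (wedge b a)"
proof -
  have "wedge a b = (-1) *\<^sub>R wedge b a"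
    using wedge_commute[of a b] by simp
  then show ?thesis
    using L.scale_right[OF wedge_in_Lambda2 assms, of "-1"] by simp
qed

lemma bivec_form_wedge_bound:
  assumes "Y \<in> Lambda2"
  shows "(bivec_form Y (wedge a b))\<^sup>2 \<le> bivec_form Y Y * (vec_form a a * vec_form b b)"
proof -
  have "(bivec_form Y (wedge a b))\<^sup>2 \<le> bivec_form Y Y * bivec_form (wedge a b) (wedge a b)"
    using L.Cauchy_Schwarz assms wedge_in_Lambda2 by blast
  moreover have "bivec_form (wedge a b) (wedge a b) \<le> vec_form a a * vec_form b b"
    using V.sym[of a b] by (simp add: bivec_form_wedge)
  ultimately show ?thesis
    using L.nonneg[OF assms] by (meson mult_left_mono order_trans)
qed

lemma eq_wedge_sum_if_pairings_eq:
  assumes "Y \<in> Lambda2"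
    and "\<And>a b. bivec_form Y (wedge a b) =
           (\<Sum>j<m. vec_form (x j) a * vec_form (v j) b - vec_form (x j) b * vec_form (v j) a)"
  shows "Y = (\<Sum>j<m. wedge (x j) (v j))"
proof -
  let ?Z = "Y - (\<Sum>j<m. wedge (x j) (v j))"
  have sum_in_Lambda2: "(\<Sum>j<m. wedge (x j) (v j)) \<in> Lambda2"
    unfolding Lambda2_def by (intro span_sum span_base) blast
  have "bivec_form ?Z (wedge a b) = 0" for a b
  proof -
    have "bivec_form ?Z (wedge a b)
          = bivec_form Y (wedge a b) - (\<Sum>j<m. bivec_form (wedge (x j) (v j)) (wedge a b))"
      using L.diff_left[OF assms(1) sum_in_Lambda2 wedge_in_Lambda2]
        L.sum_left[OF wedge_in_Lambda2 wedge_in_Lambda2] by simp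
    then show ?thesis
      using assms(2) by (simp add: bivec_form_wedge sum_subtractf)
  qed
  moreover have "?Z \<in> span {wedge a b |a b. True}"
    using assms(1) sum_in_Lambda2 by (simp add: Lambda2_def span_diff)
  ultimately have "?Z = 0"
    by (intro L.eq_0_if_orthogonal_generators[of "{wedge a b |a b. True}"])
      (auto simp: wedge_in_Lambda2)
  then show ?thesis
    by simp
qed

lemma eunorm_vec: "eunorm ip (v, 0) = sqrt (vec_form v v)"
  by (simp add: eunorm_def vec_form_def)

lemma eunorm_bivec: "eunorm ip (0, Y) = sqrt (bivec_form Y Y)"
  by (simp add: eunorm_def bivec_form_def)

lemma MinHeight_square_le:
  assumes "0 \<le> \<epsilon>" "\<epsilon> \<le> MinHeight ip m x" "j < m" "s \<in> span (x ` ({..<m} - {j}))"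
  shows "\<epsilon>\<^sup>2 \<le> vec_form (x j - s) (x j - s)"
proof -
  have "MinHeight ip m x \<le> eudist_set ip (x j) (span (x ` ({..<m} - {j})))"
    unfolding MinHeight_def using assms(3) by (intro Min_le) auto
  also have "\<dots> \<le> sqrt (vec_form (x j - s) (x j - s))"
    unfolding eudist_set_def eunorm_vec[symmetric] using assms(4)
    by (intro cInf_lower bdd_belowI[of _ 0]) (auto simp: eunorm_vec V.nonneg)
  finally have "\<epsilon> \<le> sqrt (vec_form (x j - s) (x j - s))"
    using assms(2) by linarith
  then have "\<epsilon>\<^sup>2 \<le> (sqrt (vec_form (x j - s) (x j - s)))\<^sup>2"
    using assms(1) by (rule power_mono)
  then show ?thesis
    using V.nonneg[of "x j - s"] by simp
qed

lemma wedge_decomposition_bounded: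
  fixes x :: "nat \<Rightarrow> real^'n"
  assumes "CARD('n) \<ge> 2" "Y \<in> Lambda2" "\<epsilon> > 0" "MinHeight ip (CARD('n) - 1) x \<ge> \<epsilon>"
  shows "\<exists>v. Y = (\<Sum>j<CARD('n) - 1. wedge (x j) (v j))
             \<and> (\<forall>j<CARD('n) - 1. eunorm ip (v j, 0) \<le> eunorm ip (0, Y) / \<epsilon>)"
proof -
  let ?m = "CARD('n) - 1"
  have "\<forall>j<?m. \<forall>s\<in>span (x ` ({..<?m} - {j})). \<epsilon>\<^sup>2 \<le> vec_form (x j - s) (x j - s)"
    using MinHeight_square_le[OF less_imp_le[OF assms(3)] assms(4)] by blast
  then obtain f where f: "V.dual_basis ?m x f" "\<forall>j<?m. vec_form (f j) (f j) \<le> 1 / \<epsilon>\<^sup>2"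
    using V.dual_basis_exists[OF assms(3)] by blast
  have "?m + 1 = DIM(real^'n)"
    using assms(1) by simp
  then obtain v where
    v: "\<forall>a b. bivec_form Y (wedge a b) =
          (\<Sum>j<?m. vec_form (x j) a * vec_form (v j) b - vec_form (x j) b * vec_form (v j) a)"
       "\<forall>j<?m. vec_form (v j) (v j) \<le> bivec_form Y Y * vec_form (f j) (f j)"
    using V.antisymmetric_form_decomposition[OF bilinear_bivec_form_wedge[OF assms(2)]
        bivec_form_wedge_commute[OF assms(2)] bivec_form_wedge_bound[OF assms(2)]
        L.nonneg[OF assms(2)] f(1)]
    by blast
  have "eunorm ip (v j, 0) \<le> eunorm ip (0, Y) / \<epsilon>" if "j < ?m" for j
  proof -
    have "vec_form (v j) (v j) \<le> bivec_form Y Y * (1 / \<epsilon>\<^sup>2)"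
      using v(2) mult_left_mono[OF f(2)[rule_format] L.nonneg[OF assms(2)]] that
      by (meson order_trans)
    then have "sqrt (vec_form (v j) (v j)) \<le> sqrt (bivec_form Y Y * (1 / \<epsilon>\<^sup>2))"
      by (rule real_sqrt_le_mono)
    also have "\<dots> = sqrt (bivec_form Y Y) / \<epsilon>"
      using assms(3) by (simp add: real_sqrt_divide)
    finally show ?thesis
      by (simp add: eunorm_vec eunorm_bivec)
  qed
  then show ?thesis
    using eq_wedge_sum_if_pairings_eq[OF assms(2)] v(1) by blast
qed

end

theorem mainTheorem9:
  fixes ip :: "((real^'n) \<times> (real^'n^'n)) \<Rightarrow> ((real^'n) \<times> (real^'n^'n)) \<Rightarrow> real"
  assumes "CARD('n) \<ge> 2"
    and "adequate ip"
  shows "\<exists>K1::real. \<forall>(x :: nat \<Rightarrow> real^'n) (Y :: real^'n^'n) (\<epsilon>::real).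
           Y \<in> Lambda2 \<and> \<epsilon> > 0 \<and> MinHeight ip (CARD('n) - 1) x \<ge> \<epsilon> \<longrightarrow>
           (\<exists>v :: nat \<Rightarrow> real^'n.
              Y = (\<Sum>j<CARD('n) - 1. wedge (x j) (v j)) \<and>
              (\<forall>j<CARD('n) - 1. eunorm ip (v j, 0) \<le> K1 * eunorm ip (0, Y) / \<epsilon>))"
proof -
  interpret adequate_space ip
    by (rule adequate_space.intro) fact
  show ?thesis
    using wedge_decomposition_bounded[OF assms(1)] by (intro exI[of _ 1]) simp
qed

end
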